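(* Let $s\ge1$ be an integer and $f,g$ formal power series. Then \[ \zeta_s\odot(f*g)=\sum_{\substack{a+c=s\\ a,c\ge0}}(\zeta_a\odot f)*(\zeta_c\odot g)\;-\;\Big(\sum_{\substack{a+c=s-1\\ a,c\ge0}}(\zeta_a\odot f)*(\zeta_c\odot g)\Big)*\zeta_1 . \]
   Context: For an integer $j\ge0$, $\zeta_j(x)=\frac{x^j}{(1-x)^{j+1}}=\sum_{n\ge0}\binom{n}{j}x^n$. For formal power series $f,g$, $f*g:=f(x)\,(1-x)\,g(x)$ (Cauchy product), and the Hadamard product is $\left(\sum_n a_nx^n\right)\odot\left(\sum_n b_nx^n\right)=\sum_n a_nb_nx^n$. *)

theory Defs
  imports "HOL-Computational_Algebra.Formal_Power_Series"
begin

text \<open>zeta_j(x) = x^j/(1-x)^(j+1) = sum_n (n choose j) x^n\<close>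
definition zeta :: "nat \<Rightarrow> 'a::comm_ring_1 fps" where
  "zeta j = Abs_fps (\<lambda>n. of_nat (n choose j))"

definition fstar :: "'a::comm_ring_1 fps \<Rightarrow> 'a fps \<Rightarrow> 'a fps" (infixl "\<star>" 70) where
  "fstar f g = f * (1 - fps_X) * g"

definition hadamard :: "'a::comm_ring_1 fps \<Rightarrow> 'a fps \<Rightarrow> 'a fps" (infixl "\<odot>" 75) where
  "hadamard f g = Abs_fps (\<lambda>n. fps_nth f n * fps_nth g n)"

end

theory Submission
  imports Defs
begin

text \<open>Write \<open>H\<^sub>s = \<zeta>\<^sub>s \<odot> (f g)\<close>. Vandermonde's identity turns the sum over \<open>a + c = s\<close>
  of \<open>(\<zeta>\<^sub>a \<odot> f) (\<zeta>\<^sub>c \<odot> g)\<close> into \<open>H\<^sub>s\<close>, so the right-hand side is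
  \<open>(1 - x) H\<^sub>s - (1 - x)\<^sup>2 \<zeta>\<^sub>1 H\<^sub>s\<^sub>-\<^sub>1 = (1 - x) H\<^sub>s - x H\<^sub>s\<^sub>-\<^sub>1\<close>.
  On the left, Pascal's rule \<open>\<zeta>\<^sub>s \<odot> (x h) = x (\<zeta>\<^sub>s \<odot> h + \<zeta>\<^sub>s\<^sub>-\<^sub>1 \<odot> h)\<close> applied to
  \<open>h = f g\<close> gives the same series.\<close>

lemma hadamard_zeta_nth:
  "fps_nth (zeta j \<odot> h) n = of_nat (n choose j) * fps_nth h n"
  by (simp add: hadamard_def zeta_def)

lemma hadamard_diff_right:
  fixes f g h :: "'a::comm_ring_1 fps"
  shows "f \<odot> (g - h) = f \<odot> g - f \<odot> h"
  by (rule fps_ext) (simp add: hadamard_def algebra_simps)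

lemma sum_hadamard_zeta_mult:
  fixes f g :: "'a::comm_ring_1 fps"
  shows "(\<Sum>a\<le>s. (zeta a \<odot> f) * (zeta (s - a) \<odot> g)) = zeta s \<odot> (f * g)"
proof (rule fps_ext)
  fix n
  have "fps_nth (\<Sum>a\<le>s. (zeta a \<odot> f) * (zeta (s - a) \<odot> g)) n
      = (\<Sum>a\<le>s. \<Sum>i=0..n. of_nat (i choose a) * fps_nth f i * (of_nat ((n - i) choose (s - a)) * fps_nth g (n - i)))"
    by (simp add: fps_sum_nth fps_mult_nth hadamard_zeta_nth)
  also have "\<dots> = (\<Sum>i=0..n. \<Sum>a\<le>s. of_nat (i choose a) * fps_nth f i * (of_nat ((n - i) choose (s - a)) * fps_nth g (n - i)))"
    by (rule sum.swap)
  also have "\<dots> = (\<Sum>i=0..n. of_nat (\<Sum>a\<le>s. (i choose a) * ((n - i) choose (s - a))) * (fps_nth f i * fps_nth g (n - i)))"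
    by (intro sum.cong refl) (simp add: of_nat_sum sum_distrib_left sum_distrib_right mult_ac)
  also have "\<dots> = (\<Sum>i=0..n. of_nat (n choose s) * (fps_nth f i * fps_nth g (n - i)))"
    by (intro sum.cong refl) (simp add: vandermonde)
  also have "\<dots> = fps_nth (zeta s \<odot> (f * g)) n"
    by (simp add: hadamard_zeta_nth fps_mult_nth sum_distrib_left)
  finally show "fps_nth (\<Sum>a\<le>s. (zeta a \<odot> f) * (zeta (s - a) \<odot> g)) n = fps_nth (zeta s \<odot> (f * g)) n" .
qed

lemma sum_hadamard_zeta_fstar:
  fixes f g :: "'a::comm_ring_1 fps"
  shows "(\<Sum>a\<le>s. (zeta a \<odot> f) \<star> (zeta (s - a) \<odot> g)) = (1 - fps_X) * (zeta s \<odot> (f * g))"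
  unfolding sum_hadamard_zeta_mult[symmetric] fstar_def sum_distrib_left
  by (intro sum.cong refl) (simp add: ac_simps)

lemma hadamard_zeta_Suc_X_mult:
  fixes h :: "'a::comm_ring_1 fps"
  shows "zeta (Suc j) \<odot> (fps_X * h) = fps_X * (zeta (Suc j) \<odot> h + zeta j \<odot> h)"
proof (rule fps_ext)
  fix n
  show "fps_nth (zeta (Suc j) \<odot> (fps_X * h)) n = fps_nth (fps_X * (zeta (Suc j) \<odot> h + zeta j \<odot> h)) n"
    by (cases n) (simp_all add: hadamard_zeta_nth fps_X_mult_nth algebra_simps)
qed

lemma one_minus_X_mult_zeta_0: "(1 - fps_X) * (zeta 0 :: 'a::comm_ring_1 fps) = 1"
proof (rule fps_ext)
  fix n
  show "fps_nth ((1 - fps_X) * (zeta 0 :: 'a fps)) n = fps_nth (1 :: 'a fps) n"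
    by (cases n) (simp_all add: zeta_def fps_X_mult_nth algebra_simps)
qed

lemma one_minus_X_mult_zeta_Suc:
  "(1 - fps_X) * (zeta (Suc j) :: 'a::comm_ring_1 fps) = fps_X * zeta j"
proof (rule fps_ext)
  fix n
  show "fps_nth ((1 - fps_X) * (zeta (Suc j) :: 'a fps)) n = fps_nth (fps_X * zeta j) n"
    by (cases n) (simp_all add: zeta_def fps_X_mult_nth algebra_simps)
qed

lemma one_minus_X_power_mult_zeta:
  "(1 - fps_X) ^ Suc j * (zeta j :: 'a::comm_ring_1 fps) = fps_X ^ j"
proof (induction j)
  case 0
  show ?case by (simp add: one_minus_X_mult_zeta_0)
next
  case (Suc j)
  have "(1 - fps_X) ^ Suc (Suc j) * (zeta (Suc j) :: 'a fps)
      = (1 - fps_X) ^ Suc j * ((1 - fps_X) * zeta (Suc j))"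
    by (simp only: power_Suc2 mult.assoc)
  also have "\<dots> = fps_X * ((1 - fps_X) ^ Suc j * zeta j)"
    unfolding one_minus_X_mult_zeta_Suc by (rule mult.left_commute)
  also have "\<dots> = fps_X ^ Suc j"
    unfolding Suc.IH by (rule power_Suc[symmetric])
  finally show ?case .
qed

theorem lemma2p7:
  fixes f g :: "'a::comm_ring_1 fps" and s :: nat
  assumes "s \<ge> 1"
  shows "zeta s \<odot> (f \<star> g) =
    (\<Sum>a\<le>s. (zeta a \<odot> f) \<star> (zeta (s - a) \<odot> g))
    - (\<Sum>a\<le>s - 1. (zeta a \<odot> f) \<star> (zeta (s - 1 - a) \<odot> g)) \<star> zeta 1"
proof -
  obtain j where s: "s = Suc j"
    using assms by (cases s) auto
  define h where "h = f * g"
  have "zeta s \<odot> (f \<star> g) = zeta s \<odot> (h - fps_X * h)"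
    by (simp add: h_def fstar_def algebra_simps)
  also have "\<dots> = (1 - fps_X) * (zeta s \<odot> h) - fps_X * (zeta j \<odot> h)"
    by (simp add: s hadamard_diff_right hadamard_zeta_Suc_X_mult algebra_simps)
  also have "fps_X * (zeta j \<odot> h) = (1 - fps_X) * (zeta j \<odot> h) \<star> zeta 1"
  proof -
    have "(1 - fps_X) * (zeta j \<odot> h) \<star> zeta 1 = (zeta j \<odot> h) * ((1 - fps_X) ^ Suc 1 * zeta 1)"
      by (simp add: fstar_def power2_eq_square mult_ac)
    also have "\<dots> = fps_X * (zeta j \<odot> h)"
      unfolding one_minus_X_power_mult_zeta by (simp add: mult.commute)
    finally show ?thesis ..
  qed
  finally show ?thesis
    by (simp add: s h_def sum_hadamard_zeta_fstar)
qed

end
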